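(* Let $\mathbb X,\mathbb H,\mathbb Y$ be separable real Hilbert spaces, $\mathbf W\colon\mathbb X\to\mathbb H$ and $\mathbf A\colon\mathbb H\to\mathbb Y$ bounded linear operators, $\mathcal R\colon\mathbb X\to[0,\infty]$ proper, convex and weakly lower semicontinuous, $(\phi_\lambda)_{\lambda\in\Lambda}$ an orthonormal basis of $\mathbb H$ indexed by a countable set $\Lambda$, and $(\kappa_\lambda)_{\lambda\in\Lambda}$ weights with $\kappa_\lambda\ge a>0$. Assume there is $x\in\mathbb X$ with $\mathcal R(x)+\|\mathbf W x\|_{1,\kappa}<\infty$. Suppose $(x_\star,y_\star)\in\mathbb X\times\mathbb Y$ satisfies: (2.1) $\mathbf A\mathbf W x_\star=y_\star$; (2.2) there is $\nu\in\mathbb Y$ with $\mathbf W^*\mathbf A^*\nu\in\partial\big(\mathcal R+\|\mathbf W(\cdot)\|_{1,\kappa}\big)(x_\star)$; (2.3) there exist $\xi\in\partial\mathcal R(x_\star)$ and $\eta\in\partial\|\cdot\|_{1,\kappa}(\mathbf W x_\star)$ with $\mathbf W^*\mathbf A^*\nu=\xi+\mathbf W^*\eta$; (2.4) $\mathbf A_{\Omega[\eta]}\colon\mathbb H_{\Omega[\eta]}\to\mathbb Y$ is injective. Let $C>0$. Then for every $\delta>0$, every $y^\delta\in\mathbb Y$ with $\|y^\delta-y_\star\|\le\delta$, $\alpha=C\delta$, and every minimizer $x_\alpha^\delta$ over $\mathbb X$ of $$\mathcal A_{\alpha,y^\delta}(x)=\tfrac12\|\mathbf A\mathbf W x-y^\delta\|^2+\alpha\big(\mathcal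 R(x)+\|\mathbf W x\|_{1,\kappa}\big),$$ we have $$\mathcal D^{\mathcal R}_\xi(x_\alpha^\delta,x_\star)\le c_{(\nu,\eta)}\,\delta,\qquad \|\mathbf W x_\alpha^\delta-\mathbf W x_\star\|\le d_{(\nu,\eta)}\,\delta,$$ where $$c_{(\nu,\eta)}=\frac{(1+C\|\nu\|)^2}{2C},\qquad d_{(\nu,\eta)}=2\|\mathbf A_{\Omega[\eta]}^{-1}\|\,(1+C\|\nu\|)+\frac{1+\|\mathbf A_{\Omega[\eta]}^{-1}\|\,\|\mathbf A\|}{m[\eta]}\,c_{(\nu,\eta)}.$$
   Context: Weighted $\ell^1$ norm: $\|h\|_{1,\kappa}=\sum_{\lambda\in\Lambda}\kappa_\lambda|\langle\phi_\lambda,h\rangle|\in[0,\infty]$ for $h\in\mathbb H$. Subdifferential: $\xi\in\partial\mathcal F(z_\star)$ iff $\mathcal F(z)\ge\mathcal F(z_\star)+\langle\xi,z-z_\star\rangle$ for all $z$. Bregman distance: for $\xi\in\partial\mathcal F(z_\star)$, $\mathcal D^{\mathcal F}_\xi(z,z_\star)=\mathcal F(z)-\mathcal F(z_\star)-\langle\xi,z-z_\star\rangle$. For $\eta=\sum_\lambda\eta_\lambda\phi_\lambda\in\partial\|\cdot\|_{1,\kappa}(h_\star)$ (which forces $|\eta_\lambda|\le\kappa_\lambda$ for all $\lambda$), set $\Omega[\eta]=\{\lambda\in\Lambda: |\eta_\lambda|=\kappa_\lambda\}$ (a finite set) and $m[\eta]=\min\{\kappa_\lambda-|\eta_\lambda|:\lambda\notin\Omega[\eta]\}>0$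 (with the term involving $1/m[\eta]$ read as $0$ if $\Lambda=\Omega[\eta]$). For finite $\Omega\subseteq\Lambda$: $\mathbb H_\Omega=\operatorname{span}\{\phi_\lambda:\lambda\in\Omega\}$, $\mathbf A_\Omega=\mathbf A|_{\mathbb H_\Omega}\colon\mathbb H_\Omega\to\mathbb Y$, and when $\mathbf A_\Omega$ is injective, $\|\mathbf A_\Omega^{-1}\|$ is the operator norm of its inverse $\operatorname{ran}(\mathbf A_\Omega)\to\mathbb H_\Omega$. *)

theory Defs
  imports "HOL-Analysis.Analysis"
begin

text \<open>Separable real Hilbert spaces are types of class real_inner + complete_space
  whose norm topology is separable.\<close>

definition weakly_closed :: "'a::real_inner set \<Rightarrow> bool" where
  "weakly_closed S \<longleftrightarrow>
     (\<forall>x. x \<notin> S \<longrightarrow> (\<exists>Z e. finite Z \<and> e > 0 \<and>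
         (\<forall>y\<in>S. \<exists>z\<in>Z. \<bar>(y - x) \<bullet> z\<bar> \<ge> e)))"

definition weakly_lsc :: "('a::real_inner \<Rightarrow> ereal) \<Rightarrow> bool" where
  "weakly_lsc F \<longleftrightarrow> (\<forall>t. weakly_closed {x. F x \<le> t})"

definition proper_fun :: "('a \<Rightarrow> ereal) \<Rightarrow> bool" where
  "proper_fun F \<longleftrightarrow> (\<exists>x. F x < \<infinity>) \<and> (\<forall>x. F x > -\<infinity>)"

definition convex_ereal :: "('a::real_vector \<Rightarrow> ereal) \<Rightarrow> bool" where
  "convex_ereal F \<longleftrightarrow> (\<forall>x y t. 0 < t \<and> t < 1 \<longrightarrow>
      F (t *\<^sub>R x + (1 - t) *\<^sub>R y) \<le> ereal t * F x + ereal (1 - t) * F y)"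

definition orthonormal_basis :: "'l set \<Rightarrow> ('l \<Rightarrow> 'h::real_inner) \<Rightarrow> bool" where
  "orthonormal_basis \<Lambda> \<phi> \<longleftrightarrow>
     (\<forall>i\<in>\<Lambda>. \<forall>j\<in>\<Lambda>. \<phi> i \<bullet> \<phi> j = (if i = j then 1 else 0)) \<and>
     closure (span (\<phi> ` \<Lambda>)) = UNIV"

definition wl1 :: "'l set \<Rightarrow> ('l \<Rightarrow> 'h::real_inner) \<Rightarrow> ('l \<Rightarrow> real) \<Rightarrow> 'h \<Rightarrow> ereal" where
  "wl1 \<Lambda> \<phi> \<kappa> h = enn2ereal (\<Sum>\<^sub>\<infinity>l\<in>\<Lambda>. ennreal (\<kappa> l * \<bar>\<phi> l \<bullet> h\<bar>))"

definition subdiff :: "('a::real_inner \<Rightarrow> ereal) \<Rightarrow> 'a \<Rightarrow> 'a set" where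
  "subdiff F z0 = {\<xi>. \<forall>z. F z \<ge> F z0 + ereal (\<xi> \<bullet> (z - z0))}"

definition bregman :: "('a::real_inner \<Rightarrow> ereal) \<Rightarrow> 'a \<Rightarrow> 'a \<Rightarrow> 'a \<Rightarrow> ereal" where
  "bregman F \<xi> z z0 = F z - F z0 - ereal (\<xi> \<bullet> (z - z0))"

definition Omega :: "'l set \<Rightarrow> ('l \<Rightarrow> 'h::real_inner) \<Rightarrow> ('l \<Rightarrow> real) \<Rightarrow> 'h \<Rightarrow> 'l set" where
  "Omega \<Lambda> \<phi> \<kappa> \<eta> = {l\<in>\<Lambda>. \<bar>\<phi> l \<bullet> \<eta>\<bar> = \<kappa> l}"

definition m_eta :: "'l set \<Rightarrow> ('l \<Rightarrow> 'h::real_inner) \<Rightarrow> ('l \<Rightarrow> real) \<Rightarrow> 'h \<Rightarrow> real" where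
  "m_eta \<Lambda> \<phi> \<kappa> \<eta> = (INF l\<in>\<Lambda> - Omega \<Lambda> \<phi> \<kappa> \<eta>. \<kappa> l - \<bar>\<phi> l \<bullet> \<eta>\<bar>)"

text \<open>Operator norm of the inverse of A restricted to the subspace H (A injective on H),
  as a map from ran(A|H) to H.\<close>
definition inv_opnorm :: "('h::real_normed_vector \<Rightarrow> 'y::real_normed_vector) \<Rightarrow> 'h set \<Rightarrow> real" where
  "inv_opnorm A H = Sup ((\<lambda>y. norm (the_inv_into H A y)) ` {y \<in> A ` H. norm y \<le> 1})"

text \<open>The constants c and d; the 1/m term is read as 0 if \<Lambda> = \<Omega>.\<close>
definition c_const :: "real \<Rightarrow> real \<Rightarrow> real" where
  "c_const C nn = (1 + C * nn)\<^sup>2 / (2 * C)"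

definition d_const :: "real \<Rightarrow> real \<Rightarrow> real \<Rightarrow> real \<Rightarrow> bool \<Rightarrow> real \<Rightarrow> real" where
  "d_const C nn ai an full m =
     2 * ai * (1 + C * nn) + (if full then 0 else (1 + ai * an) / m * c_const C nn)"

end

theory Submission
  imports Defs
begin

text \<open>Testing the minimality of \<open>x\<close> against \<open>x\<^sub>\<star>\<close> and expressing the linear part of the
  regulariser through the source condition \<open>W\<^sup>*A\<^sup>*\<nu> = \<xi> + W\<^sup>*\<eta>\<close>, the residual
  \<open>r = \<parallel>A W x - y\<^sup>\<delta>\<parallel>\<close> and the sum \<open>D\<close> of the two Bregman distances satisfy
  \<open>r\<^sup>2/2 + \<alpha> D \<le> \<delta>\<^sup>2/2 + \<alpha> \<parallel>\<nu>\<parallel> (r + \<delta>)\<close>. Completing the square with \<open>\<alpha> = C \<delta>\<close>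
  bounds \<open>D\<close> by \<open>c \<delta>\<close> and \<open>\<parallel>A W (x - x\<^sub>\<star>)\<parallel>\<close> by \<open>2 \<delta> (1 + C \<parallel>\<nu>\<parallel>)\<close>.
  As \<open>\<eta>\<close> is a subgradient of the weighted l1 norm at \<open>W x\<^sub>\<star>\<close>, the coefficients of
  \<open>W x\<^sub>\<star>\<close> vanish outside the finite set \<open>\<Omega>[\<eta>]\<close>, and the corresponding Bregman distance
  dominates \<open>m[\<eta>]\<close> times the l1 norm of the coefficients of \<open>h = W x - W x\<^sub>\<star>\<close> outside
  \<open>\<Omega>[\<eta>]\<close>. The component of \<open>h\<close> in \<open>span (\<phi> ` \<Omega>[\<eta>])\<close> is then recovered from \<open>A h\<close>
  by the injectivity of \<open>A\<close> on that finite-dimensional space.\<close>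

lemma minimizing_sequence_Cauchy:
  fixes S :: "'a::real_inner set"
  assumes S: "convex S" and kS: "\<And>n. k n \<in> S"
    and k_lim: "(\<lambda>n. norm (u - k n)) \<longlonglongrightarrow> infdist u S"
  shows "Cauchy k"
proof (rule metric_CauchyI)
  fix \<epsilon> :: real assume "\<epsilon> > 0"
  define d where "d = infdist u S"
  define g where "g = (\<lambda>n. (norm (u - k n))\<^sup>2 - d\<^sup>2)"
  have d_le: "d \<le> norm (u - q)" if "q \<in> S" for q
    using infdist_le[OF that] by (simp add: d_def dist_norm)
  have "g \<longlonglongrightarrow> d\<^sup>2 - d\<^sup>2"
    unfolding g_def d_def by (intro tendsto_intros k_lim)
  then obtain M where M: "\<And>n. n \<ge> M \<Longrightarrow> \<bar>g n\<bar> < \<epsilon>\<^sup>2 / 4"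
    using tendstoD[of g 0 sequentially "\<epsilon>\<^sup>2 / 4"] \<open>\<epsilon> > 0\<close>
    by (auto simp: eventually_sequentially)
  \<comment> \<open>Parallelogram law at the midpoint, which lies in \<open>S\<close> by convexity.\<close>
  have close: "(norm (k m - k n))\<^sup>2 \<le> 2 * g m + 2 * g n" for m n
  proof -
    have "(1/2) *\<^sub>R (k m + k n) \<in> S"
      using convexD[OF S kS kS, of "1/2" "1/2"] by (simp add: scaleR_add_right)
    then have "d\<^sup>2 \<le> (norm (u - (1/2) *\<^sub>R (k m + k n)))\<^sup>2"
      using d_le infdist_nonneg[of u S] power_mono unfolding d_def by blast
    moreover have "(norm (k m - k n))\<^sup>2 = 2 * (norm (u - k m))\<^sup>2 + 2 * (norm (u - k n))\<^sup>2
        - 4 * (norm (u - (1/2) *\<^sub>R (k m + k n)))\<^sup>2"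
      by (simp add: power2_norm_eq_inner inner_diff_left inner_diff_right inner_add_left
          inner_add_right inner_commute algebra_simps)
    ultimately show ?thesis
      unfolding g_def by (smt (verit))
  qed
  have "(dist (k m) (k n))\<^sup>2 < \<epsilon>\<^sup>2" if "m \<ge> M" "n \<ge> M" for m n
    using close[of m n] M[OF that(1)] M[OF that(2)] by (simp add: dist_norm abs_less_iff)
  then have "dist (k m) (k n) < \<epsilon>" if "m \<ge> M" "n \<ge> M" for m n
    using power_less_imp_less_base[of "dist (k m) (k n)" 2 \<epsilon>] that \<open>\<epsilon> > 0\<close> by simp
  then show "\<exists>M. \<forall>m\<ge>M. \<forall>n\<ge>M. dist (k m) (k n) < \<epsilon>"
    by blast
qed

lemma nearest_point_exists_closed_convex:
  fixes S :: "'a::{real_inner,complete_space} set"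
  assumes S: "closed S" "convex S" "S \<noteq> {}"
  obtains p where "p \<in> S" "\<And>q. q \<in> S \<Longrightarrow> norm (u - p) \<le> norm (u - q)"
proof -
  define d where "d = infdist u S"
  have d_le: "d \<le> norm (u - q)" if "q \<in> S" for q
    using infdist_le[OF that] by (simp add: d_def dist_norm)
  have "\<exists>k\<in>S. norm (u - k) < d + inverse (real (Suc n))" for n
  proof -
    have "(INF k\<in>S. dist u k) < d + inverse (real (Suc n))"
      using S(3) by (simp add: d_def infdist_notempty)
    then show ?thesis
      using cInf_lessD[of "(\<lambda>k. dist u k) ` S"] S(3) by (auto simp: dist_norm)
  qed
  then obtain k where kS: "\<And>n. k n \<in> S"
    and k_near: "\<And>n. norm (u - k n) < d + inverse (real (Suc n))"
    by metis
  have k_lim: "(\<lambda>n. norm (u - k n)) \<longlonglongrightarrow> d"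
  proof (rule real_tendsto_sandwich[of "\<lambda>_. d" _ _ "\<lambda>n. d + inverse (real (Suc n))"])
    show "(\<lambda>n. d + inverse (real (Suc n))) \<longlonglongrightarrow> d"
      by (rule LIMSEQ_inverse_real_of_nat_add)
    show "\<forall>\<^sub>F n in sequentially. d \<le> norm (u - k n)"
      using d_le kS by (blast intro: always_eventually)
    show "\<forall>\<^sub>F n in sequentially. norm (u - k n) \<le> d + inverse (real (Suc n))"
      using k_near less_imp_le by (blast intro: always_eventually)
  qed simp
  obtain p where kp: "k \<longlonglongrightarrow> p"
    using minimizing_sequence_Cauchy[OF S(2) kS k_lim[unfolded d_def]]
    by (auto simp: Cauchy_convergent_iff convergent_def)
  have "p \<in> S"
    using S(1) kS kp closed_sequentially by blast
  moreover have "norm (u - p) = d"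
    using LIMSEQ_unique[OF tendsto_norm[OF tendsto_diff[OF tendsto_const kp]] k_lim] .
  ultimately show ?thesis
    using d_le that by force
qed

lemma nearest_point_subspace_orthogonal:
  fixes S :: "'a::real_inner set"
  assumes "subspace S" "p \<in> S" "\<And>q. q \<in> S \<Longrightarrow> norm (u - p) \<le> norm (u - q)" "q \<in> S"
  shows "(u - p) \<bullet> q = 0"
proof -
  define w s Q where "w = u - p" and "s = w \<bullet> q" and "Q = q \<bullet> q"
  define t where "t = s / (Q + 1)"
  have Q: "Q \<ge> 0" by (simp add: Q_def)
  \<comment> \<open>Moving from \<open>p\<close> along \<open>q\<close> by \<open>t\<close> cannot decrease the distance to \<open>u\<close>.\<close>
  have "p + t *\<^sub>R q \<in> S"
    using assms by (simp add: subspace_add subspace_scale)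
  then have "(norm w)\<^sup>2 \<le> (norm (w - t *\<^sub>R q))\<^sup>2"
    using assms(3) by (simp add: w_def power_mono algebra_simps)
  then have "0 \<le> t * t * Q - 2 * t * s"
    by (simp add: power2_norm_eq_inner inner_diff_left inner_diff_right s_def Q_def
        inner_commute algebra_simps)
  moreover have "s = t * (Q + 1)"
    unfolding t_def using Q by simp
  ultimately have "t * t * (Q + 2) \<le> 0"
    by (simp add: algebra_simps)
  then have "t = 0"
    using Q by (simp add: mult_le_0_iff) linarith
  then show ?thesis
    using \<open>s = t * (Q + 1)\<close> by (simp add: s_def w_def)
qed

lemma riesz_representation:
  fixes f :: "'a::{real_inner,complete_space} \<Rightarrow> real"
  assumes "bounded_linear f"
  obtains z where "\<And>x. f x = x \<bullet> z"
proof (cases "\<forall>x. f x = 0")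
  case True
  then show ?thesis using that[of 0] by simp
next
  case False
  interpret f: bounded_linear f by fact
  obtain u0 where "f u0 \<noteq> 0" using False by blast
  define u where "u = u0 /\<^sub>R f u0"
  have fu: "f u = 1"
    using \<open>f u0 \<noteq> 0\<close> by (simp add: u_def f.scale)
  define K where "K = {x. f x = 0}"
  have K: "subspace K"
    by (simp add: K_def subspace_def f.add f.scale f.zero)
  have "closed K"
    unfolding K_def by (intro closed_Collect_eq continuous_intros f.continuous_on)
  then obtain p where pK: "p \<in> K" and p_near: "\<And>q. q \<in> K \<Longrightarrow> norm (u - p) \<le> norm (u - q)"
    using nearest_point_exists_closed_convex[of K u] K subspace_imp_convex subspace_0
    by blast
  define w where "w = u - p"
  have fw: "f w = 1"
    using pK fu by (simp add: w_def f.diff K_def)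
  have "f x = x \<bullet> (w /\<^sub>R (w \<bullet> w))" for x
  proof -
    have "x - f x *\<^sub>R w \<in> K"
      using fw by (simp add: K_def f.diff f.scale)
    then have "w \<bullet> (x - f x *\<^sub>R w) = 0"
      using nearest_point_subspace_orthogonal[OF K pK p_near] by (simp add: w_def)
    then have "x \<bullet> w = f x * (w \<bullet> w)"
      by (simp add: inner_diff_right inner_commute)
    moreover have "w \<bullet> w \<noteq> 0"
      using fw by auto
    ultimately show ?thesis by simp
  qed
  then show ?thesis by (rule that)
qed

lemma adjoint_inner:
  fixes f :: "'a::{real_inner,complete_space} \<Rightarrow> 'b::real_inner"
  assumes "bounded_linear f"
  shows "f x \<bullet> y = x \<bullet> adjoint f y"
proof -
  have "\<exists>z. \<forall>x. f x \<bullet> y = x \<bullet> z" for y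
    using riesz_representation[OF bounded_linear_compose[OF bounded_linear_inner_left assms]]
    by metis
  then have "\<exists>f'. \<forall>x y. f x \<bullet> y = x \<bullet> f' y"
    by metis
  then show ?thesis
    unfolding adjoint_def by (rule someI_ex[where P = "\<lambda>f'. \<forall>x y. f x \<bullet> y = x \<bullet> f' y", THEN spec, THEN spec])
qed

locale orthonormal_system =
  fixes \<Lambda> :: "'l set" and \<phi> :: "'l \<Rightarrow> 'a::real_inner"
  assumes orthonormal: "\<And>i j. i \<in> \<Lambda> \<Longrightarrow> j \<in> \<Lambda> \<Longrightarrow> \<phi> i \<bullet> \<phi> j = (if i = j then 1 else 0)"
begin

lemma inner_sum_basis:
  assumes "finite F" "F \<subseteq> \<Lambda>" "k \<in> \<Lambda>"
  shows "\<phi> k \<bullet> (\<Sum>l\<in>F. c l *\<^sub>R \<phi> l) = (if k \<in> F then c k else 0)"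
proof -
  have "\<phi> k \<bullet> (c l *\<^sub>R \<phi> l) = (if k = l then c l else 0)" if "l \<in> F" for l
    using orthonormal[OF assms(3), of l] that assms(2) by auto
  then have "\<phi> k \<bullet> (\<Sum>l\<in>F. c l *\<^sub>R \<phi> l) = (\<Sum>l\<in>F. if k = l then c l else 0)"
    by (simp add: inner_sum_right del: inner_scaleR_right)
  then show ?thesis
    using assms(1) by simp
qed

lemma norm_sum_basis_le:
  assumes "F \<subseteq> \<Lambda>"
  shows "norm (\<Sum>l\<in>F. c l *\<^sub>R \<phi> l) \<le> (\<Sum>l\<in>F. \<bar>c l\<bar>)"
proof -
  have "norm (\<phi> l) = 1" if "l \<in> \<Lambda>" for l
    using orthonormal[OF that that] by (simp add: norm_eq_sqrt_inner)
  then have "(\<Sum>l\<in>F. norm (c l *\<^sub>R \<phi> l)) = (\<Sum>l\<in>F. \<bar>c l\<bar>)"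
    using assms by (auto simp: subset_iff)
  then show ?thesis
    using norm_sum[of "\<lambda>l. c l *\<^sub>R \<phi> l" F] by simp
qed

lemma inner_residual_orthogonal:
  assumes "finite F" "F \<subseteq> \<Lambda>" "l \<in> F"
  shows "\<phi> l \<bullet> (h - (\<Sum>k\<in>F. (\<phi> k \<bullet> h) *\<^sub>R \<phi> k)) = 0"
  using inner_sum_basis[OF assms(1,2), of l "\<lambda>k. \<phi> k \<bullet> h"] assms
  by (auto simp: inner_diff_right)

lemma bessel_inequality:
  assumes "finite F" "F \<subseteq> \<Lambda>"
  shows "(\<Sum>l\<in>F. (\<phi> l \<bullet> h)\<^sup>2) \<le> (norm h)\<^sup>2"
proof -
  define p where "p = (\<Sum>l\<in>F. (\<phi> l \<bullet> h) *\<^sub>R \<phi> l)"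
  have p_inner: "p \<bullet> q = (\<Sum>l\<in>F. (\<phi> l \<bullet> h) * (\<phi> l \<bullet> q))" for q
    unfolding p_def by (simp add: inner_sum_left)
  have "(h - p) \<bullet> p = 0"
    using p_inner[of "h - p"] inner_residual_orthogonal[OF assms]
    by (simp add: inner_commute p_def)
  then have "(norm h)\<^sup>2 = (norm (h - p))\<^sup>2 + (norm p)\<^sup>2"
    using norm_add_Pythagorean[of "h - p" p] by (simp add: orthogonal_def)
  moreover have "\<phi> l \<bullet> p = \<phi> l \<bullet> h" if "l \<in> F" for l
    using inner_sum_basis[OF assms] that assms(2) by (auto simp: p_def)
  then have "(norm p)\<^sup>2 = (\<Sum>l\<in>F. (\<phi> l \<bullet> h)\<^sup>2)"
    using p_inner[of p] unfolding power2_norm_eq_inner by (simp add: power2_eq_square)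
  ultimately show ?thesis
    by simp
qed

lemma finite_large_coefficients:
  assumes "e > 0"
  shows "finite {l\<in>\<Lambda>. \<bar>\<phi> l \<bullet> h\<bar> \<ge> e}"
proof (rule ccontr)
  assume inf: "infinite {l\<in>\<Lambda>. \<bar>\<phi> l \<bullet> h\<bar> \<ge> e}"
  obtain n :: nat where n: "(norm h)\<^sup>2 / e\<^sup>2 < real n"
    using reals_Archimedean2 by blast
  obtain F where F: "finite F" "card F = n" "F \<subseteq> {l\<in>\<Lambda>. \<bar>\<phi> l \<bullet> h\<bar> \<ge> e}"
    using infinite_arbitrarily_large[OF inf] by blast
  have "real n * e\<^sup>2 = (\<Sum>l\<in>F. e\<^sup>2)"
    using F by simp
  also have "\<dots> \<le> (\<Sum>l\<in>F. (\<phi> l \<bullet> h)\<^sup>2)"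
  proof (rule sum_mono)
    fix l assume "l \<in> F"
    then have "e\<^sup>2 \<le> \<bar>\<phi> l \<bullet> h\<bar>\<^sup>2"
      using F(3) assms by (intro power_mono) auto
    then show "e\<^sup>2 \<le> (\<phi> l \<bullet> h)\<^sup>2"
      by simp
  qed
  also have "\<dots> \<le> (norm h)\<^sup>2"
    using F by (intro bessel_inequality) auto
  finally have "real n * e\<^sup>2 \<le> (norm h)\<^sup>2" .
  moreover have "(norm h)\<^sup>2 < real n * e\<^sup>2"
    using n assms by (simp add: pos_divide_less_eq)
  ultimately show False
    by linarith
qed

lemma inj_on_basis: "inj_on \<phi> \<Lambda>"
proof (rule inj_onI)
  fix i j assume "i \<in> \<Lambda>" "j \<in> \<Lambda>" "\<phi> i = \<phi> j"
  then have "\<phi> i \<bullet> \<phi> j = 1"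
    using orthonormal[of j j] by simp
  then show "i = j"
    using orthonormal[of i j] \<open>i \<in> \<Lambda>\<close> \<open>j \<in> \<Lambda>\<close> by (auto split: if_splits)
qed

lemma span_basis_finite_sum:
  assumes "s \<in> span (\<phi> ` \<Lambda>)"
  obtains F c where "finite F" "F \<subseteq> \<Lambda>" "s = (\<Sum>l\<in>F. c l *\<^sub>R \<phi> l)"
proof -
  obtain T r where T: "finite T" "T \<subseteq> \<phi> ` \<Lambda>" and sT: "s = (\<Sum>v\<in>T. r v *\<^sub>R v)"
    using assms unfolding span_explicit by blast
  obtain F where F: "F \<subseteq> \<Lambda>" "T = \<phi> ` F" "finite F"
    using finite_subset_image[OF T] by metis
  have "s = (\<Sum>l\<in>F. r (\<phi> l) *\<^sub>R \<phi> l)"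
    unfolding sT F(2) using inj_on_subset[OF inj_on_basis F(1)] by (simp add: sum.reindex)
  then show ?thesis
    by (rule that[OF F(3) F(1)])
qed

lemma norm_le_coefficient_sums:
  assumes complete: "closure (span (\<phi> ` \<Lambda>)) = UNIV"
    and bound: "\<And>F. finite F \<Longrightarrow> F \<subseteq> \<Lambda> \<Longrightarrow> (\<Sum>l\<in>F. \<bar>\<phi> l \<bullet> g\<bar>) \<le> B"
  shows "norm g \<le> B"
proof (rule field_le_epsilon)
  fix \<epsilon> :: real assume "\<epsilon> > 0"
  have "g \<in> closure (span (\<phi> ` \<Lambda>))"
    using complete by simp
  then obtain s where s: "s \<in> span (\<phi> ` \<Lambda>)" "dist s g < \<epsilon>"
    using \<open>\<epsilon> > 0\<close> closure_approachable by blast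
  obtain F c where F: "finite F" "F \<subseteq> \<Lambda>" and sF: "s = (\<Sum>l\<in>F. c l *\<^sub>R \<phi> l)"
    using s(1) by (rule span_basis_finite_sum)
  \<comment> \<open>The orthogonal projection \<open>p\<close> of \<open>g\<close> onto \<open>span (\<phi> ` F)\<close> is no farther from \<open>g\<close> than \<open>s\<close>.\<close>
  define p where "p = (\<Sum>l\<in>F. (\<phi> l \<bullet> g) *\<^sub>R \<phi> l)"
  have ps: "p - s = (\<Sum>l\<in>F. ((\<phi> l \<bullet> g) - c l) *\<^sub>R \<phi> l)"
    by (simp add: p_def sF sum_subtractf scaleR_diff_left)
  have "(g - p) \<bullet> (p - s) = (p - s) \<bullet> (g - p)"
    by (rule inner_commute)
  also have "\<dots> = (\<Sum>l\<in>F. ((\<phi> l \<bullet> g) - c l) * (\<phi> l \<bullet> (g - p)))"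
    unfolding ps by (simp only: inner_sum_left inner_scaleR_left)
  also have "\<dots> = 0"
    using inner_residual_orthogonal[OF F, of _ g] by (simp add: p_def[symmetric])
  finally have "orthogonal (g - p) (p - s)"
    by (simp add: orthogonal_def)
  from norm_add_Pythagorean[OF this]
  have "(norm (g - s))\<^sup>2 = (norm (g - p))\<^sup>2 + (norm (p - s))\<^sup>2"
    by (simp only: add_diff_eq diff_add_cancel)
  then have "(norm (g - p))\<^sup>2 \<le> (norm (g - s))\<^sup>2"
    by simp
  then have "norm (g - p) \<le> norm (g - s)"
    by (rule power2_le_imp_le) simp
  moreover have "norm p \<le> B"
    using norm_sum_basis_le[OF F(2), of "\<lambda>l. \<phi> l \<bullet> g"] bound[OF F] by (simp add: p_def)
  moreover have "norm g \<le> norm (g - p) + norm p"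
    using norm_triangle_ineq[of "g - p" p] by simp
  moreover have "norm (g - s) < \<epsilon>"
    using s(2) by (simp add: dist_norm norm_minus_commute)
  ultimately show "norm g \<le> B + \<epsilon>"
    by linarith
qed

end

lemma wl1_nonneg: "0 \<le> wl1 \<Lambda> \<phi> \<kappa> h"
  by (simp add: wl1_def)

lemma wl1_finiteE:
  assumes "wl1 \<Lambda> \<phi> \<kappa> h \<noteq> \<infinity>"
  obtains r where "wl1 \<Lambda> \<phi> \<kappa> h = ereal r"
  using assms wl1_nonneg[of \<Lambda> \<phi> \<kappa> h] by (cases "wl1 \<Lambda> \<phi> \<kappa> h") auto

lemma subdiff_not_infinity:
  assumes "\<xi> \<in> subdiff F z0" "F z \<noteq> \<infinity>"
  shows "F z0 \<noteq> \<infinity>"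
proof
  assume "F z0 = \<infinity>"
  moreover have "F z0 + ereal (\<xi> \<bullet> (z - z0)) \<le> F z"
    using assms(1) unfolding subdiff_def by blast
  ultimately show False
    using assms(2) by simp
qed

lemma subdiff_wl1_finite:
  assumes "\<eta> \<in> subdiff (wl1 \<Lambda> \<phi> \<kappa>) v"
  shows "wl1 \<Lambda> \<phi> \<kappa> v \<noteq> \<infinity>"
proof (rule subdiff_not_infinity[OF assms])
  show "wl1 \<Lambda> \<phi> \<kappa> 0 \<noteq> \<infinity>"
    by (simp add: wl1_def zero_ennreal.rep_eq)
qed

context orthonormal_system
begin

lemma wl1_split:
  assumes F: "finite F" "F \<subseteq> \<Lambda>" and \<kappa>_nonneg: "\<And>l. l \<in> \<Lambda> \<Longrightarrow> 0 \<le> \<kappa> l"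
  shows "wl1 \<Lambda> \<phi> \<kappa> w
    = wl1 \<Lambda> \<phi> \<kappa> (w - (\<Sum>l\<in>F. (\<phi> l \<bullet> w) *\<^sub>R \<phi> l)) + ereal (\<Sum>l\<in>F. \<kappa> l * \<bar>\<phi> l \<bullet> w\<bar>)"
proof -
  define z where "z = w - (\<Sum>l\<in>F. (\<phi> l \<bullet> w) *\<^sub>R \<phi> l)"
  have z: "\<phi> k \<bullet> z = (if k \<in> F then 0 else \<phi> k \<bullet> w)" if "k \<in> \<Lambda>" for k
    using inner_sum_basis[OF F that, of "\<lambda>l. \<phi> l \<bullet> w"] by (simp add: z_def inner_diff_right)
  define a where "a = (\<lambda>h l. ennreal (\<kappa> l * \<bar>\<phi> l \<bullet> h\<bar>))"
  have wl1_a: "wl1 \<Lambda> \<phi> \<kappa> h = enn2ereal (infsum (a h) \<Lambda>)" for h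
    by (simp add: wl1_def a_def)
  have summable: "f summable_on X" for f :: "'l \<Rightarrow> ennreal" and X
    by (rule nonneg_summable_on_complete) simp
  have split: "infsum (a h) \<Lambda> = infsum (a h) (\<Lambda> - F) + infsum (a h) F" for h
    using infsum_Un_disjoint[OF summable[of "a h" "\<Lambda> - F"] summable[of "a h" F]] F(2)
    by (simp add: Un_absorb2 Int_commute)
  have "infsum (a w) F = ennreal (\<Sum>l\<in>F. \<kappa> l * \<bar>\<phi> l \<bullet> w\<bar>)"
    using F \<kappa>_nonneg by (auto simp: a_def intro!: sum_ennreal)
  moreover have "infsum (a z) F = 0"
    using F z by (auto simp: a_def)
  moreover have "infsum (a z) (\<Lambda> - F) = infsum (a w) (\<Lambda> - F)"
    using z by (intro infsum_cong) (auto simp: a_def)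
  moreover have "0 \<le> (\<Sum>l\<in>F. \<kappa> l * \<bar>\<phi> l \<bullet> w\<bar>)"
    using F \<kappa>_nonneg by (intro sum_nonneg) auto
  ultimately show ?thesis
    unfolding wl1_a z_def[symmetric] split[of w] split[of z]
    by (simp add: plus_ennreal.rep_eq)
qed

lemma wl1_bregman_ge_partial_sum:
  assumes \<kappa>_nonneg: "\<And>l. l \<in> \<Lambda> \<Longrightarrow> 0 \<le> \<kappa> l" and subgrad: "\<eta> \<in> subdiff (wl1 \<Lambda> \<phi> \<kappa>) v"
    and F: "finite F" "F \<subseteq> \<Lambda>"
  shows "ereal (\<Sum>l\<in>F. \<kappa> l * \<bar>\<phi> l \<bullet> u\<bar> - (\<phi> l \<bullet> \<eta>) * (\<phi> l \<bullet> u))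
    \<le> bregman (wl1 \<Lambda> \<phi> \<kappa>) \<eta> u v"
proof -
  obtain Lv where Lv: "wl1 \<Lambda> \<phi> \<kappa> v = ereal Lv"
    using subdiff_wl1_finite[OF subgrad] by (rule wl1_finiteE)
  show ?thesis
  proof (cases "wl1 \<Lambda> \<phi> \<kappa> u = \<infinity>")
    case True
    then show ?thesis
      using Lv by (simp add: bregman_def)
  next
    case False
    then obtain Lu where Lu: "wl1 \<Lambda> \<phi> \<kappa> u = ereal Lu"
      by (rule wl1_finiteE)
    define z where "z = u - (\<Sum>l\<in>F. (\<phi> l \<bullet> u) *\<^sub>R \<phi> l)"
    define S where "S = (\<Sum>l\<in>F. \<kappa> l * \<bar>\<phi> l \<bullet> u\<bar>)"
    have "wl1 \<Lambda> \<phi> \<kappa> u = wl1 \<Lambda> \<phi> \<kappa> z + ereal S"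
      using wl1_split[OF F \<kappa>_nonneg, where w = u] by (simp add: z_def S_def)
    then obtain Lz where Lz: "wl1 \<Lambda> \<phi> \<kappa> z = ereal Lz" and "Lu = Lz + S"
      using Lu by (metis ereal_plus_eq_PInfty plus_ereal.simps(1) ereal.inject ereal.distinct(1)
          wl1_finiteE)
    moreover have "wl1 \<Lambda> \<phi> \<kappa> v + ereal (\<eta> \<bullet> (z - v)) \<le> wl1 \<Lambda> \<phi> \<kappa> z"
      using subgrad unfolding subdiff_def by blast
    then have "Lv + \<eta> \<bullet> (z - v) \<le> Lz"
      using Lz Lv by simp
    moreover have "\<eta> \<bullet> (z - v) = \<eta> \<bullet> (u - v) - (\<Sum>l\<in>F. (\<phi> l \<bullet> \<eta>) * (\<phi> l \<bullet> u))"
      by (simp add: z_def inner_diff_right inner_sum_right inner_commute mult.commute)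
    ultimately show ?thesis
      using Lu Lv by (simp add: bregman_def S_def sum_subtractf)
  qed
qed

lemma subdiff_wl1_coordinate:
  assumes \<kappa>_nonneg: "\<And>l. l \<in> \<Lambda> \<Longrightarrow> 0 \<le> \<kappa> l" and subgrad: "\<eta> \<in> subdiff (wl1 \<Lambda> \<phi> \<kappa>) v"
    and l: "l \<in> \<Lambda>"
  shows "\<kappa> l * \<bar>\<phi> l \<bullet> v\<bar> + t * (\<phi> l \<bullet> \<eta>) \<le> \<kappa> l * \<bar>\<phi> l \<bullet> v + t\<bar>"
proof -
  have F: "finite {l}" "{l} \<subseteq> \<Lambda>"
    using l by auto
  define w where "w = v + t *\<^sub>R \<phi> l"
  define z where "z = v - (\<phi> l \<bullet> v) *\<^sub>R \<phi> l"
  have wl: "\<phi> l \<bullet> w = \<phi> l \<bullet> v + t"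
    using orthonormal[OF l l] by (simp add: w_def inner_add_right)
  \<comment> \<open>\<open>v\<close> and \<open>w\<close> differ only in the \<open>l\<close>-th coefficient, so they share the remainder \<open>z\<close>.\<close>
  have "w - (\<phi> l \<bullet> w) *\<^sub>R \<phi> l = z"
    unfolding wl by (simp add: w_def z_def algebra_simps)
  then have w: "wl1 \<Lambda> \<phi> \<kappa> w = wl1 \<Lambda> \<phi> \<kappa> z + ereal (\<kappa> l * \<bar>\<phi> l \<bullet> v + t\<bar>)"
    using wl1_split[OF F \<kappa>_nonneg, where w = w] wl by simp
  have v: "wl1 \<Lambda> \<phi> \<kappa> v = wl1 \<Lambda> \<phi> \<kappa> z + ereal (\<kappa> l * \<bar>\<phi> l \<bullet> v\<bar>)"
    using wl1_split[OF F \<kappa>_nonneg, where w = v] by (simp add: z_def)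
  obtain Lz where Lz: "wl1 \<Lambda> \<phi> \<kappa> z = ereal Lz"
    using subdiff_wl1_finite[OF subgrad] v
    by (metis ereal_plus_eq_PInfty wl1_finiteE)
  have "wl1 \<Lambda> \<phi> \<kappa> v + ereal (\<eta> \<bullet> (w - v)) \<le> wl1 \<Lambda> \<phi> \<kappa> w"
    using subgrad unfolding subdiff_def by blast
  moreover have "\<eta> \<bullet> (w - v) = t * (\<phi> l \<bullet> \<eta>)"
    by (simp add: w_def inner_commute)
  ultimately show ?thesis
    using v w Lz by simp
qed

lemma subdiff_wl1_coeff_le:
  assumes \<kappa>_nonneg: "\<And>l. l \<in> \<Lambda> \<Longrightarrow> 0 \<le> \<kappa> l" and subgrad: "\<eta> \<in> subdiff (wl1 \<Lambda> \<phi> \<kappa>) v"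
    and l: "l \<in> \<Lambda>"
  shows "\<bar>\<phi> l \<bullet> \<eta>\<bar> \<le> \<kappa> l"
proof -
  have "\<kappa> l * \<bar>\<phi> l \<bullet> v + t\<bar> \<le> \<kappa> l * \<bar>\<phi> l \<bullet> v\<bar> + \<kappa> l" if "\<bar>t\<bar> = 1" for t
    using mult_left_mono[OF abs_triangle_ineq[of "\<phi> l \<bullet> v" t] \<kappa>_nonneg[OF l]] that
    by (simp add: distrib_left)
  from this[of 1] this[of "-1"] show ?thesis
    using subdiff_wl1_coordinate[OF \<kappa>_nonneg subgrad l, of 1]
      subdiff_wl1_coordinate[OF \<kappa>_nonneg subgrad l, of "-1"]
    by (simp add: abs_le_iff)
qed

lemma subdiff_wl1_coeff_eq_zero:
  assumes \<kappa>_nonneg: "\<And>l. l \<in> \<Lambda> \<Longrightarrow> 0 \<le> \<kappa> l" and subgrad: "\<eta> \<in> subdiff (wl1 \<Lambda> \<phi> \<kappa>) v"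
    and l: "l \<in> \<Lambda> - Omega \<Lambda> \<phi> \<kappa> \<eta>"
  shows "\<phi> l \<bullet> v = 0"
proof (rule ccontr)
  assume "\<phi> l \<bullet> v \<noteq> 0"
  have "\<bar>\<phi> l \<bullet> \<eta>\<bar> < \<kappa> l"
    using subdiff_wl1_coeff_le[OF \<kappa>_nonneg subgrad] l by (force simp: Omega_def)
  then have "\<bar>\<phi> l \<bullet> v\<bar> * \<bar>\<phi> l \<bullet> \<eta>\<bar> < \<bar>\<phi> l \<bullet> v\<bar> * \<kappa> l"
    using \<open>\<phi> l \<bullet> v \<noteq> 0\<close> by simp
  moreover have "(\<phi> l \<bullet> v) * (\<phi> l \<bullet> \<eta>) \<le> \<bar>\<phi> l \<bullet> v\<bar> * \<bar>\<phi> l \<bullet> \<eta>\<bar>"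
    by (metis abs_ge_self abs_mult)
  moreover have "\<kappa> l * \<bar>\<phi> l \<bullet> v\<bar> \<le> (\<phi> l \<bullet> v) * (\<phi> l \<bullet> \<eta>)"
    using subdiff_wl1_coordinate[OF \<kappa>_nonneg subgrad, of l "- (\<phi> l \<bullet> v)"] l by simp
  ultimately show False
    by (simp add: mult.commute)
qed

end

lemma pairwise_orthogonal_expansion:
  fixes E :: "'a::real_inner set"
  assumes E: "finite E" "pairwise orthogonal E" and y: "y \<in> span E"
  shows "y = (\<Sum>b\<in>E. (b \<bullet> y / (b \<bullet> b)) *\<^sub>R b)"
proof -
  define r where "r = y - (\<Sum>b\<in>E. (b \<bullet> y / (b \<bullet> b)) *\<^sub>R b)"
  have "b \<bullet> (\<Sum>c\<in>E. (c \<bullet> y / (c \<bullet> c)) *\<^sub>R c) = b \<bullet> y" if b: "b \<in> E" for b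
  proof -
    have "b \<bullet> (\<Sum>c\<in>E. (c \<bullet> y / (c \<bullet> c)) *\<^sub>R c) = (\<Sum>c\<in>E. if c = b then b \<bullet> y else 0)"
      unfolding inner_sum_right
      using E(2) b by (intro sum.cong refl) (auto simp: pairwise_def orthogonal_def inner_commute)
    then show ?thesis
      using E(1) b by simp
  qed
  then have "orthogonal r b" if "b \<in> E" for b
    using that by (simp add: r_def orthogonal_def inner_diff_right inner_commute)
  moreover have "r \<in> span E"
    unfolding r_def using y by (simp add: span_diff span_sum span_base span_mul)
  ultimately have "orthogonal r r"
    using orthogonal_to_span by blast
  then show ?thesis
    by (simp add: r_def orthogonal_def)
qed

lemma linear_inj_on_span_bounded_below:
  fixes A :: "'a::real_inner \<Rightarrow> 'b::real_inner"
  assumes A: "linear A" and S: "finite S" and inj: "inj_on A (span S)"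
  obtains K where "K \<ge> 0" "\<And>p. p \<in> span S \<Longrightarrow> norm p \<le> K * norm (A p)"
proof -
  obtain E where E: "finite E" "pairwise orthogonal E" "span E = A ` span S"
    using basis_orthogonal[OF finite_imageI[OF S, of A]] span_linear_image[OF A] by metis
  \<comment> \<open>Pull an orthogonal basis of the image back through \<open>A\<close>.\<close>
  define q where "q = the_inv_into (span S) A"
  have qS: "q b \<in> span S" and Aq: "A (q b) = b" if "b \<in> E" for b
    using that E(3) span_base[of b E] inj
    by (auto simp: q_def intro: the_inv_into_into f_the_inv_into_f)
  define K where "K = (\<Sum>b\<in>E. norm (q b) / norm b)"
  have "norm p \<le> K * norm (A p)" if p: "p \<in> span S" for p
  proof -
    define c where "c = (\<lambda>b. b \<bullet> A p / (b \<bullet> b))"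
    define p' where "p' = (\<Sum>b\<in>E. c b *\<^sub>R q b)"
    have "A p' = (\<Sum>b\<in>E. c b *\<^sub>R b)"
      using Aq by (simp add: p'_def linear_sum[OF A] linear_scale[OF A])
    also have "\<dots> = A p"
      using pairwise_orthogonal_expansion[OF E(1,2), of "A p"] p E(3) by (simp add: c_def)
    finally have "p' = p"
      using inj p qS by (auto simp: p'_def intro: inj_onD span_sum span_mul)
    then have "norm p \<le> (\<Sum>b\<in>E. norm (c b *\<^sub>R q b))"
      unfolding p'_def by (metis norm_sum)
    also have "\<dots> \<le> (\<Sum>b\<in>E. norm (A p) * (norm (q b) / norm b))"
    proof (rule sum_mono)
      fix b assume "b \<in> E"
      have "\<bar>b \<bullet> A p\<bar> / (b \<bullet> b) \<le> norm (A p) / norm b"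
        using Cauchy_Schwarz_ineq2[of b "A p"]
        by (cases "b = 0") (simp_all add: power2_norm_eq_inner[symmetric] power2_eq_square field_simps)
      then have "\<bar>b \<bullet> A p\<bar> / (b \<bullet> b) * norm (q b) \<le> norm (A p) / norm b * norm (q b)"
        by (rule mult_right_mono) simp
      then show "norm (c b *\<^sub>R q b) \<le> norm (A p) * (norm (q b) / norm b)"
        by (simp add: c_def)
    qed
    also have "\<dots> = K * norm (A p)"
      by (simp add: K_def sum_distrib_left mult.commute)
    finally show ?thesis .
  qed
  moreover have "K \<ge> 0"
    unfolding K_def by (intro sum_nonneg) auto
  ultimately show ?thesis
    using that by blast
qed

lemma inv_opnorm_bound:
  fixes A :: "'a::real_inner \<Rightarrow> 'b::real_inner"
  assumes A: "linear A" and S: "finite S" and inj: "inj_on A (span S)"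
  shows "0 \<le> inv_opnorm A (span S)"
    and "\<And>p. p \<in> span S \<Longrightarrow> norm p \<le> inv_opnorm A (span S) * norm (A p)"
proof -
  obtain K where "K \<ge> 0" and K: "\<And>p. p \<in> span S \<Longrightarrow> norm p \<le> K * norm (A p)"
    using linear_inj_on_span_bounded_below[OF A S inj] by blast
  define Y where "Y = {y \<in> A ` span S. norm y \<le> 1}"
  define T where "T = the_inv_into (span S) A"
  have TS: "T y \<in> span S" and AT: "A (T y) = y" if "y \<in> A ` span S" for y
    using that inj unfolding T_def by (auto intro: the_inv_into_into f_the_inv_into_f)
  have T_eq: "T (A p) = p" if "p \<in> span S" for p
    using the_inv_into_f_f[OF inj that] by (simp add: T_def)
  have bdd: "bdd_above ((\<lambda>y. norm (T y)) ` Y)"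
  proof (rule bdd_aboveI2)
    fix y assume "y \<in> Y"
    then have "y \<in> A ` span S" "norm y \<le> 1"
      by (auto simp: Y_def)
    then show "norm (T y) \<le> K"
      using K[OF TS] AT \<open>K \<ge> 0\<close> by (metis mult_left_le order_trans)
  qed
  have T_le: "norm (T y) \<le> inv_opnorm A (span S)" if "y \<in> Y" for y
    unfolding inv_opnorm_def T_def[symmetric] Y_def[symmetric] using bdd that by (rule cSUP_upper2) simp
  have A0: "A 0 = 0"
    by (rule linear_0[OF A])
  show "0 \<le> inv_opnorm A (span S)"
    using T_le[of 0] T_eq[of 0] A0 by (simp add: Y_def span_zero image_eqI[of 0 _ 0])
  show "norm p \<le> inv_opnorm A (span S) * norm (A p)" if p: "p \<in> span S" for p
  proof (cases "A p = 0")
    case True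
    then show ?thesis
      using inj_onD[OF inj, of p 0] p A0 by (simp add: span_zero)
  next
    case False
    \<comment> \<open>Normalise \<open>A p\<close> to the unit sphere and use the defining supremum.\<close>
    define c where "c = norm (A p)"
    have "c > 0"
      using False by (simp add: c_def)
    have pc: "p /\<^sub>R c \<in> span S"
      using p by (simp add: span_mul)
    moreover have "norm (A (p /\<^sub>R c)) = 1"
      using \<open>c > 0\<close> by (simp add: linear_scale[OF A] c_def)
    ultimately have "A (p /\<^sub>R c) \<in> Y"
      by (simp add: Y_def)
    from T_le[OF this] have "norm p / c \<le> inv_opnorm A (span S)"
      using T_eq[OF pc] \<open>c > 0\<close> by (simp add: divide_inverse mult.commute)
    then show ?thesis
      using \<open>c > 0\<close> by (simp add: c_def pos_divide_le_eq mult.commute)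
  qed
qed

lemma m_eta_le:
  assumes "\<And>l. l \<in> \<Lambda> \<Longrightarrow> \<bar>\<phi> l \<bullet> \<eta>\<bar> \<le> \<kappa> l" and "l \<in> \<Lambda> - Omega \<Lambda> \<phi> \<kappa> \<eta>"
  shows "m_eta \<Lambda> \<phi> \<kappa> \<eta> \<le> \<kappa> l - \<bar>\<phi> l \<bullet> \<eta>\<bar>"
  unfolding m_eta_def
proof (rule cINF_lower)
  show "bdd_below ((\<lambda>l. \<kappa> l - \<bar>\<phi> l \<bullet> \<eta>\<bar>) ` (\<Lambda> - Omega \<Lambda> \<phi> \<kappa> \<eta>))"
    using assms(1) by (intro bdd_belowI2[of _ 0]) auto
qed (rule assms(2))

context orthonormal_system
begin

lemma finite_Omega:
  assumes "a > 0" "\<And>l. l \<in> \<Lambda> \<Longrightarrow> a \<le> \<kappa> l"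
  shows "finite (Omega \<Lambda> \<phi> \<kappa> \<eta>)"
proof (rule finite_subset)
  show "Omega \<Lambda> \<phi> \<kappa> \<eta> \<subseteq> {l\<in>\<Lambda>. \<bar>\<phi> l \<bullet> \<eta>\<bar> \<ge> a}"
    using assms(2) by (auto simp: Omega_def)
qed (rule finite_large_coefficients[OF assms(1)])

lemma m_eta_pos:
  assumes a: "a > 0" "\<And>l. l \<in> \<Lambda> \<Longrightarrow> a \<le> \<kappa> l"
    and \<eta>_le: "\<And>l. l \<in> \<Lambda> \<Longrightarrow> \<bar>\<phi> l \<bullet> \<eta>\<bar> \<le> \<kappa> l" and "\<Lambda> \<noteq> Omega \<Lambda> \<phi> \<kappa> \<eta>"
  shows "m_eta \<Lambda> \<phi> \<kappa> \<eta> > 0"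
proof -
  define \<Omega> where "\<Omega> = Omega \<Lambda> \<phi> \<kappa> \<eta>"
  define gap where "gap = (\<lambda>l. \<kappa> l - \<bar>\<phi> l \<bullet> \<eta>\<bar>)"
  \<comment> \<open>Only the finitely many coefficients with \<open>\<bar>\<eta>\<^sub>l\<bar> \<ge> a/2\<close> can have a gap below \<open>a/2\<close>.\<close>
  define E where "E = {l\<in>\<Lambda>. \<bar>\<phi> l \<bullet> \<eta>\<bar> \<ge> a/2}"
  define M where "M = Min (insert (a/2) (gap ` (E - \<Omega>)))"
  have "finite E"
    unfolding E_def using a(1) by (intro finite_large_coefficients) simp
  have gap_pos: "gap l > 0" if "l \<in> \<Lambda> - \<Omega>" for l
    using \<eta>_le[of l] that by (force simp: gap_def \<Omega>_def Omega_def)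
  have M_pos: "M > 0"
    unfolding M_def using \<open>finite E\<close> a(1) gap_pos by (subst Min_gr_iff) (auto simp: E_def)
  have "M \<le> gap l" if l: "l \<in> \<Lambda> - \<Omega>" for l
  proof (cases "l \<in> E")
    case True
    then show ?thesis
      unfolding M_def using \<open>finite E\<close> l by (intro Min_le) auto
  next
    case False
    moreover have "M \<le> a/2"
      unfolding M_def using \<open>finite E\<close> by (intro Min_le) auto
    ultimately show ?thesis
      using l a(2)[of l] by (auto simp: E_def gap_def)
  qed
  moreover have "\<Lambda> - \<Omega> \<noteq> {}"
    using assms(4) by (auto simp: \<Omega>_def Omega_def)
  ultimately have "M \<le> m_eta \<Lambda> \<phi> \<kappa> \<eta>"
    unfolding m_eta_def \<Omega>_def[symmetric] gap_def[symmetric] by (intro cINF_greatest) auto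
  with M_pos show ?thesis
    by linarith
qed

lemma wl1_bregman_ge_tail:
  assumes \<kappa>_nonneg: "\<And>l. l \<in> \<Lambda> \<Longrightarrow> 0 \<le> \<kappa> l" and subgrad: "\<eta> \<in> subdiff (wl1 \<Lambda> \<phi> \<kappa>) v"
    and F: "finite F" "F \<subseteq> \<Lambda> - Omega \<Lambda> \<phi> \<kappa> \<eta>"
  shows "ereal (m_eta \<Lambda> \<phi> \<kappa> \<eta> * (\<Sum>l\<in>F. \<bar>\<phi> l \<bullet> (u - v)\<bar>)) \<le> bregman (wl1 \<Lambda> \<phi> \<kappa>) \<eta> u v"
proof -
  have \<eta>_le: "\<And>l. l \<in> \<Lambda> \<Longrightarrow> \<bar>\<phi> l \<bullet> \<eta>\<bar> \<le> \<kappa> l"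
    by (rule subdiff_wl1_coeff_le[OF \<kappa>_nonneg subgrad])
  have "m_eta \<Lambda> \<phi> \<kappa> \<eta> * \<bar>\<phi> l \<bullet> (u - v)\<bar> \<le> \<kappa> l * \<bar>\<phi> l \<bullet> u\<bar> - (\<phi> l \<bullet> \<eta>) * (\<phi> l \<bullet> u)"
    if l: "l \<in> F" for l
  proof -
    have "l \<in> \<Lambda> - Omega \<Lambda> \<phi> \<kappa> \<eta>"
      using l F(2) by auto
    then have "\<phi> l \<bullet> (u - v) = \<phi> l \<bullet> u" and "m_eta \<Lambda> \<phi> \<kappa> \<eta> \<le> \<kappa> l - \<bar>\<phi> l \<bullet> \<eta>\<bar>"
      using subdiff_wl1_coeff_eq_zero[OF \<kappa>_nonneg subgrad] \<eta>_le
      by (auto simp: inner_diff_right intro: m_eta_le)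
    moreover have "(\<phi> l \<bullet> \<eta>) * (\<phi> l \<bullet> u) \<le> \<bar>\<phi> l \<bullet> \<eta>\<bar> * \<bar>\<phi> l \<bullet> u\<bar>"
      by (metis abs_ge_self abs_mult)
    ultimately show ?thesis
      using mult_right_mono[of "m_eta \<Lambda> \<phi> \<kappa> \<eta>" "\<kappa> l - \<bar>\<phi> l \<bullet> \<eta>\<bar>" "\<bar>\<phi> l \<bullet> u\<bar>"]
      by (simp add: algebra_simps)
  qed
  then have "ereal (m_eta \<Lambda> \<phi> \<kappa> \<eta> * (\<Sum>l\<in>F. \<bar>\<phi> l \<bullet> (u - v)\<bar>))
      \<le> ereal (\<Sum>l\<in>F. \<kappa> l * \<bar>\<phi> l \<bullet> u\<bar> - (\<phi> l \<bullet> \<eta>) * (\<phi> l \<bullet> u))"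
    by (simp add: sum_distrib_left sum_mono)
  also have "\<dots> \<le> bregman (wl1 \<Lambda> \<phi> \<kappa>) \<eta> u v"
    using F(2) by (intro wl1_bregman_ge_partial_sum[OF \<kappa>_nonneg subgrad F(1)]) auto
  finally show ?thesis .
qed

lemma wl1_tail_sum_le:
  assumes a: "a > 0" "\<And>l. l \<in> \<Lambda> \<Longrightarrow> a \<le> \<kappa> l" and subgrad: "\<eta> \<in> subdiff (wl1 \<Lambda> \<phi> \<kappa>) v"
    and bregman_le: "bregman (wl1 \<Lambda> \<phi> \<kappa>) \<eta> u v \<le> ereal b"
    and F: "finite F" "F \<subseteq> \<Lambda> - Omega \<Lambda> \<phi> \<kappa> \<eta>"
  shows "(\<Sum>l\<in>F. \<bar>\<phi> l \<bullet> (u - v)\<bar>) \<le> (if \<Lambda> = Omega \<Lambda> \<phi> \<kappa> \<eta> then 0 else b / m_eta \<Lambda> \<phi> \<kappa> \<eta>)"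
proof (cases "\<Lambda> = Omega \<Lambda> \<phi> \<kappa> \<eta>")
  case True
  then show ?thesis
    using F(2) by simp
next
  case False
  have \<kappa>_nonneg: "\<And>l. l \<in> \<Lambda> \<Longrightarrow> 0 \<le> \<kappa> l"
    using a by force
  have "m_eta \<Lambda> \<phi> \<kappa> \<eta> > 0"
    using m_eta_pos[OF a subdiff_wl1_coeff_le[OF \<kappa>_nonneg subgrad] False] .
  moreover have "m_eta \<Lambda> \<phi> \<kappa> \<eta> * (\<Sum>l\<in>F. \<bar>\<phi> l \<bullet> (u - v)\<bar>) \<le> b"
    using order_trans[OF wl1_bregman_ge_tail[OF \<kappa>_nonneg subgrad F, of u] bregman_le] by simp
  ultimately show ?thesis
    using False by (simp add: pos_le_divide_eq mult.commute)
qed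

lemma norm_le_finite_part_and_tail:
  fixes A :: "'a \<Rightarrow> 'b::real_inner"
  assumes complete: "closure (span (\<phi> ` \<Lambda>)) = UNIV"
    and \<Omega>: "finite \<Omega>" "\<Omega> \<subseteq> \<Lambda>" and A: "bounded_linear A" "inj_on A (span (\<phi> ` \<Omega>))"
    and Ah: "norm (A h) \<le> \<beta>"
    and tail: "\<And>F. finite F \<Longrightarrow> F \<subseteq> \<Lambda> - \<Omega> \<Longrightarrow> (\<Sum>l\<in>F. \<bar>\<phi> l \<bullet> h\<bar>) \<le> B"
  shows "norm h \<le> inv_opnorm A (span (\<phi> ` \<Omega>)) * (\<beta> + onorm A * B) + B"
proof -
  interpret A: bounded_linear A by fact
  define P where "P = (\<Sum>l\<in>\<Omega>. (\<phi> l \<bullet> h) *\<^sub>R \<phi> l)"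
  define g where "g = h - P"
  have "P \<in> span (\<phi> ` \<Omega>)"
    unfolding P_def by (intro span_sum span_mul span_base) auto
  then have P: "norm P \<le> inv_opnorm A (span (\<phi> ` \<Omega>)) * norm (A P)"
    and ai: "0 \<le> inv_opnorm A (span (\<phi> ` \<Omega>))"
    using inv_opnorm_bound[OF A.linear finite_imageI[OF \<Omega>(1), of \<phi>] A(2)] by auto
  have g_coeff: "\<phi> l \<bullet> g = (if l \<in> \<Omega> then 0 else \<phi> l \<bullet> h)" if "l \<in> \<Lambda>" for l
    using inner_sum_basis[OF \<Omega> that, of "\<lambda>l. \<phi> l \<bullet> h"] by (simp add: g_def P_def inner_diff_right)
  have g: "norm g \<le> B"
  proof (rule norm_le_coefficient_sums[OF complete])
    fix F assume F: "finite F" "F \<subseteq> \<Lambda>"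
    have "(\<Sum>l\<in>F. \<bar>\<phi> l \<bullet> g\<bar>) = (\<Sum>l\<in>F - \<Omega>. \<bar>\<phi> l \<bullet> h\<bar>)"
      using F g_coeff by (intro sum.mono_neutral_cong_right) auto
    also have "\<dots> \<le> B"
      using F by (intro tail) auto
    finally show "(\<Sum>l\<in>F. \<bar>\<phi> l \<bullet> g\<bar>) \<le> B" .
  qed
  have "norm (A P) \<le> \<beta> + onorm A * B"
    using norm_triangle_ineq4[of "A h" "A g"] onorm[OF A(1), of g] Ah
      mult_left_mono[OF g onorm_pos_le[OF A(1)]]
    by (simp add: g_def A.diff)
  then have "norm P \<le> inv_opnorm A (span (\<phi> ` \<Omega>)) * (\<beta> + onorm A * B)"
    using P ai by (meson mult_left_mono order_trans)
  moreover have "norm h \<le> norm P + norm g"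
    using norm_triangle_ineq[of P g] by (simp add: g_def)
  ultimately show ?thesis
    using g by linarith
qed

lemma norm_diff_le_d_const:
  fixes A :: "'a \<Rightarrow> 'b::real_inner"
  assumes complete: "closure (span (\<phi> ` \<Lambda>)) = UNIV"
    and a: "a > 0" "\<And>l. l \<in> \<Lambda> \<Longrightarrow> a \<le> \<kappa> l" and subgrad: "\<eta> \<in> subdiff (wl1 \<Lambda> \<phi> \<kappa>) v"
    and A: "bounded_linear A" "inj_on A (span (\<phi> ` Omega \<Lambda> \<phi> \<kappa> \<eta>))"
    and bregman_le: "bregman (wl1 \<Lambda> \<phi> \<kappa>) \<eta> u v \<le> ereal (c_const C N * \<delta>)"
    and residual: "norm (A (u - v)) \<le> 2 * \<delta> * (1 + C * N)"
  shows "norm (u - v) \<le> d_const C N (inv_opnorm A (span (\<phi> ` Omega \<Lambda> \<phi> \<kappa> \<eta>))) (onorm A)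
    (\<Lambda> = Omega \<Lambda> \<phi> \<kappa> \<eta>) (m_eta \<Lambda> \<phi> \<kappa> \<eta>) * \<delta>"
proof -
  define \<Omega> B where "\<Omega> = Omega \<Lambda> \<phi> \<kappa> \<eta>"
    and "B = (if \<Lambda> = \<Omega> then 0 else c_const C N * \<delta> / m_eta \<Lambda> \<phi> \<kappa> \<eta>)"
  have "finite \<Omega>" "\<Omega> \<subseteq> \<Lambda>"
    using finite_Omega[OF a] by (auto simp: \<Omega>_def Omega_def)
  moreover have "(\<Sum>l\<in>F. \<bar>\<phi> l \<bullet> (u - v)\<bar>) \<le> B" if "finite F" "F \<subseteq> \<Lambda> - \<Omega>" for F
    using wl1_tail_sum_le[OF a subgrad bregman_le] that by (simp add: B_def \<Omega>_def)
  ultimately have "norm (u - v) \<le> inv_opnorm A (span (\<phi> ` \<Omega>)) * (2 * \<delta> * (1 + C * N) + onorm A * B) + B"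
    using A residual by (intro norm_le_finite_part_and_tail[OF complete]) (auto simp: \<Omega>_def)
  also have "\<dots> = d_const C N (inv_opnorm A (span (\<phi> ` \<Omega>))) (onorm A) (\<Lambda> = \<Omega>) (m_eta \<Lambda> \<phi> \<kappa> \<eta>) * \<delta>"
    by (simp add: B_def d_const_def algebra_simps add_divide_distrib)
  finally show ?thesis
    by (simp add: \<Omega>_def)
qed

end

lemma bregman_nonneg:
  assumes "\<xi> \<in> subdiff F z0" "\<bar>F z0\<bar> \<noteq> \<infinity>"
  shows "0 \<le> bregman F \<xi> z z0"
proof -
  have "F z0 + ereal (\<xi> \<bullet> (z - z0)) \<le> F z"
    using assms(1) unfolding subdiff_def by blast
  then show ?thesis
    using assms(2) by (cases "F z0"; cases "F z") (auto simp: bregman_def)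
qed

lemma bregman_add_compose:
  fixes W :: "'a::{real_inner,complete_space} \<Rightarrow> 'b::real_inner"
  assumes W: "bounded_linear W"
    and F: "\<bar>F z0\<bar> \<noteq> \<infinity>" "F z \<noteq> -\<infinity>" and G: "\<bar>G (W z0)\<bar> \<noteq> \<infinity>" "G (W z) \<noteq> -\<infinity>"
  shows "bregman (\<lambda>x. F x + G (W x)) (\<xi> + adjoint W \<eta>) z z0
    = bregman F \<xi> z z0 + bregman G \<eta> (W z) (W z0)"
proof -
  have "(\<xi> + adjoint W \<eta>) \<bullet> (z - z0) = \<xi> \<bullet> (z - z0) + W (z - z0) \<bullet> \<eta>"
    using adjoint_inner[OF W, of "z - z0" \<eta>] by (simp add: inner_add_left inner_add_right inner_commute)
  also have "W (z - z0) \<bullet> \<eta> = \<eta> \<bullet> (W z - W z0)"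
    by (simp add: inner_commute linear_diff[OF bounded_linear.linear[OF W]])
  finally have "(\<xi> + adjoint W \<eta>) \<bullet> (z - z0) = \<xi> \<bullet> (z - z0) + \<eta> \<bullet> (W z - W z0)" .
  then show ?thesis
    using F G by (cases "F z0"; cases "F z"; cases "G (W z0)"; cases "G (W z)") (auto simp: bregman_def)
qed

lemma bregman_add_compose_le:
  fixes W :: "'a::{real_inner,complete_space} \<Rightarrow> 'b::real_inner"
  assumes W: "bounded_linear W"
    and F: "\<xi> \<in> subdiff F z0" "\<bar>F z0\<bar> \<noteq> \<infinity>" "F z \<noteq> -\<infinity>"
    and G: "\<eta> \<in> subdiff G (W z0)" "\<bar>G (W z0)\<bar> \<noteq> \<infinity>" "G (W z) \<noteq> -\<infinity>"
    and le: "bregman (\<lambda>x. F x + G (W x)) (\<xi> + adjoint W \<eta>) z z0 \<le> ereal b"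
  shows "bregman F \<xi> z z0 \<le> ereal b" and "bregman G \<eta> (W z) (W z0) \<le> ereal b"
proof -
  have "bregman F \<xi> z z0 + bregman G \<eta> (W z) (W z0) \<le> ereal b"
    using le bregman_add_compose[OF W F(2,3) G(2,3)] by simp
  moreover have "0 \<le> bregman F \<xi> z z0" "0 \<le> bregman G \<eta> (W z) (W z0)"
    using bregman_nonneg[OF F(1,2)] bregman_nonneg[OF G(1,2)] by auto
  ultimately show "bregman F \<xi> z z0 \<le> ereal b" and "bregman G \<eta> (W z) (W z0) \<le> ereal b"
    by (metis add_increasing add_increasing2 order_refl order_trans)+
qed

lemma tikhonov_quadratic_estimate:
  fixes r e \<delta> C N D L :: real
  assumes "0 \<le> r" "0 \<le> e" "e \<le> \<delta>" "0 < C" "0 < \<delta>" "0 \<le> N" "0 \<le> D"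
    and ineq: "r\<^sup>2 / 2 + C * \<delta> * D \<le> e\<^sup>2 / 2 + C * \<delta> * L" and L: "L \<le> N * (r + e)"
  shows "D \<le> c_const C N * \<delta>" and "r + e \<le> 2 * \<delta> * (1 + C * N)"
proof -
  define \<alpha> where "\<alpha> = C * \<delta>"
  have "\<alpha> > 0"
    using assms by (simp add: \<alpha>_def)
  have "\<alpha> * L \<le> \<alpha> * (N * (r + e))"
    using L \<open>\<alpha> > 0\<close> by simp
  \<comment> \<open>Completing the square in \<open>r\<close>.\<close>
  have sq: "\<alpha> * D + (r - \<alpha> * N)\<^sup>2 / 2 \<le> (e + \<alpha> * N)\<^sup>2 / 2"
  proof -
    have "(r - \<alpha> * N)\<^sup>2 / 2 = r\<^sup>2 / 2 - \<alpha> * N * r + (\<alpha> * N)\<^sup>2 / 2"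
      and "(e + \<alpha> * N)\<^sup>2 / 2 = e\<^sup>2 / 2 + \<alpha> * N * e + (\<alpha> * N)\<^sup>2 / 2"
      and "\<alpha> * (N * (r + e)) = \<alpha> * N * r + \<alpha> * N * e"
      by (simp_all add: power2_eq_square field_simps)
    then show ?thesis
      using ineq[folded \<alpha>_def] \<open>\<alpha> * L \<le> \<alpha> * (N * (r + e))\<close> by linarith
  qed
  have "(e + \<alpha> * N)\<^sup>2 \<le> (\<delta> + \<alpha> * N)\<^sup>2"
    using assms \<open>\<alpha> > 0\<close> by (intro power_mono) auto
  moreover have "(\<delta> + \<alpha> * N)\<^sup>2 / 2 = \<alpha> * (c_const C N * \<delta>)"
    using assms by (simp add: \<alpha>_def c_const_def power2_eq_square field_simps)
  ultimately have "\<alpha> * D \<le> \<alpha> * (c_const C N * \<delta>)"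
    using sq zero_le_power2[of "r - \<alpha> * N"] by linarith
  then show "D \<le> c_const C N * \<delta>"
    using \<open>\<alpha> > 0\<close> by simp
  have "0 \<le> \<alpha> * D"
    using \<open>\<alpha> > 0\<close> assms(7) by simp
  then have sq': "(r - \<alpha> * N)\<^sup>2 \<le> (e + \<alpha> * N)\<^sup>2"
    using sq by linarith
  have "0 \<le> \<alpha> * N"
    using \<open>\<alpha> > 0\<close> \<open>0 \<le> N\<close> by simp
  then have "r - \<alpha> * N \<le> e + \<alpha> * N"
    using power2_le_imp_le[OF sq'] \<open>0 \<le> e\<close> by linarith
  moreover have "2 * \<delta> * (1 + C * N) = 2 * \<delta> + 2 * (\<alpha> * N)"
    by (simp add: \<alpha>_def algebra_simps)
  ultimately show "r + e \<le> 2 * \<delta> * (1 + C * N)"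
    using \<open>e \<le> \<delta>\<close> by linarith
qed

lemma tikhonov_source_condition_rate:
  fixes K :: "'x::real_inner \<Rightarrow> 'y::real_inner" and J :: "'x \<Rightarrow> ereal"
  assumes K: "linear K" and source: "\<And>u. K u \<bullet> \<nu> = u \<bullet> p"
    and J_nonneg: "\<And>x. 0 \<le> J x" and subgrad: "p \<in> subdiff J x0" and J_x0: "J x0 \<noteq> \<infinity>"
    and C: "C > 0" and \<delta>: "\<delta> > 0" and noise: "norm (y\<delta> - K x0) \<le> \<delta>"
    and min: "ereal (1/2 * (norm (K x - y\<delta>))\<^sup>2) + ereal (C * \<delta>) * J x
      \<le> ereal (1/2 * (norm (K x0 - y\<delta>))\<^sup>2) + ereal (C * \<delta>) * J x0"
  shows "bregman J p x x0 \<le> ereal (c_const C (norm \<nu>) * \<delta>)"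
    and "norm (K x - K x0) \<le> 2 * \<delta> * (1 + C * norm \<nu>)"
proof -
  obtain j0 where j0: "J x0 = ereal j0"
    using J_x0 J_nonneg[of x0] by (cases "J x0") auto
  moreover have "J x \<noteq> \<infinity>"
    using min C \<delta> j0 by auto
  ultimately obtain j where j: "J x = ereal j"
    using J_nonneg[of x] by (cases "J x") auto
  define r e D where "r = norm (K x - y\<delta>)" and "e = norm (K x0 - y\<delta>)"
    and "D = j - j0 - p \<bullet> (x - x0)"
  have D: "bregman J p x x0 = ereal D"
    by (simp add: bregman_def j j0 D_def)
  have "0 \<le> D"
    using bregman_nonneg[OF subgrad, of x] j0 D by simp
  have "e \<le> \<delta>"
    using noise by (simp add: e_def norm_minus_commute)
  \<comment> \<open>The source condition turns the linear term of the Bregman distance into residuals.\<close>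
  have "- (p \<bullet> (x - x0)) = \<nu> \<bullet> (K x0 - y\<delta>) - \<nu> \<bullet> (K x - y\<delta>)"
    using source[of "x - x0"] by (simp add: linear_diff[OF K] inner_commute inner_diff_right)
  also have "\<dots> \<le> norm \<nu> * (r + e)"
    using Cauchy_Schwarz_ineq2[of \<nu> "K x - y\<delta>"] Cauchy_Schwarz_ineq2[of \<nu> "K x0 - y\<delta>"]
    by (simp add: r_def e_def distrib_left abs_le_iff)
  finally have L: "- (p \<bullet> (x - x0)) \<le> norm \<nu> * (r + e)" .
  have "r\<^sup>2 / 2 + C * \<delta> * j \<le> e\<^sup>2 / 2 + C * \<delta> * j0"
    using min by (simp add: j j0 r_def e_def)
  moreover have "C * \<delta> * D = C * \<delta> * j - C * \<delta> * j0 + C * \<delta> * (- (p \<bullet> (x - x0)))"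
    by (simp add: D_def algebra_simps)
  ultimately have "r\<^sup>2 / 2 + C * \<delta> * D \<le> e\<^sup>2 / 2 + C * \<delta> * (- (p \<bullet> (x - x0)))"
    by linarith
  note rate = tikhonov_quadratic_estimate[OF _ _ \<open>e \<le> \<delta>\<close> C \<delta> _ \<open>0 \<le> D\<close> this L]
  show "bregman J p x x0 \<le> ereal (c_const C (norm \<nu>) * \<delta>)"
    using rate(1) D by (simp add: r_def e_def)
  have "norm (K x - K x0) \<le> r + e"
    using norm_triangle_ineq4[of "K x - y\<delta>" "K x0 - y\<delta>"] by (simp add: r_def e_def)
  then show "norm (K x - K x0) \<le> 2 * \<delta> * (1 + C * norm \<nu>)"
    using rate(2) by (simp add: r_def e_def)
qed

text \<open>Separability, convexity and weak lower semicontinuity of \<open>R\<close>, countability of \<open>\<Lambda>\<close> and the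
  domain condition serve only to guarantee that minimisers exist; the estimates hold for every
  minimiser without them.\<close>
theorem mainTheorem2:
  fixes W :: "'x::{real_inner,complete_space} \<Rightarrow> 'h::{real_inner,complete_space}"
    and A :: "'h \<Rightarrow> 'y::{real_inner,complete_space}"
    and R :: "'x \<Rightarrow> ereal"
    and \<Lambda> :: "'l set" and \<phi> :: "'l \<Rightarrow> 'h" and \<kappa> :: "'l \<Rightarrow> real" and a :: real
    and x_star :: 'x and y_star :: 'y and \<nu> :: 'y and \<xi> :: 'x and \<eta> :: 'h
    and C :: real
  assumes sepX: "separable_space (euclidean :: 'x topology)"
    and sepH: "separable_space (euclidean :: 'h topology)"
    and sepY: "separable_space (euclidean :: 'y topology)"
    and W: "bounded_linear W" and A: "bounded_linear A"
    and R_nonneg: "\<forall>x. R x \<ge> 0"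
    and R_proper: "proper_fun R" and R_convex: "convex_ereal R" and R_lsc: "weakly_lsc R"
    and \<Lambda>_countable: "countable \<Lambda>" and onb: "orthonormal_basis \<Lambda> \<phi>"
    and a_pos: "a > 0" and \<kappa>_ge: "\<forall>l\<in>\<Lambda>. \<kappa> l \<ge> a"
    and dom: "\<exists>x. R x + wl1 \<Lambda> \<phi> \<kappa> (W x) < \<infinity>"
    and c21: "A (W x_star) = y_star"
    and c22: "adjoint W (adjoint A \<nu>) \<in> subdiff (\<lambda>x. R x + wl1 \<Lambda> \<phi> \<kappa> (W x)) x_star"
    and c23: "\<xi> \<in> subdiff R x_star" "\<eta> \<in> subdiff (wl1 \<Lambda> \<phi> \<kappa>) (W x_star)"
             "adjoint W (adjoint A \<nu>) = \<xi> + adjoint W \<eta>"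
    and c24: "inj_on A (span (\<phi> ` Omega \<Lambda> \<phi> \<kappa> \<eta>))"
    and C_pos: "C > 0"
  shows "\<forall>\<delta> y_delta x_ad. \<delta> > 0 \<longrightarrow> norm (y_delta - y_star) \<le> \<delta> \<longrightarrow>
      (\<forall>x. ereal (1/2 * (norm (A (W x_ad) - y_delta))\<^sup>2)
             + ereal (C * \<delta>) * (R x_ad + wl1 \<Lambda> \<phi> \<kappa> (W x_ad))
           \<le> ereal (1/2 * (norm (A (W x) - y_delta))\<^sup>2)
             + ereal (C * \<delta>) * (R x + wl1 \<Lambda> \<phi> \<kappa> (W x))) \<longrightarrow>
      bregman R \<xi> x_ad x_star \<le> ereal (c_const C (norm \<nu>) * \<delta>) \<and>
      norm (W x_ad - W x_star) \<le>
        d_const C (norm \<nu>) (inv_opnorm A (span (\<phi> ` Omega \<Lambda> \<phi> \<kappa> \<eta>))) (onorm A)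
          (\<Lambda> = Omega \<Lambda> \<phi> \<kappa> \<eta>) (m_eta \<Lambda> \<phi> \<kappa> \<eta>) * \<delta>"
proof (intro allI impI)
  fix \<delta> :: real and y_delta :: 'y and x_ad :: 'x
  assume \<delta>: "\<delta> > 0" and noise: "norm (y_delta - y_star) \<le> \<delta>"
    and min: "\<forall>x. ereal (1/2 * (norm (A (W x_ad) - y_delta))\<^sup>2)
             + ereal (C * \<delta>) * (R x_ad + wl1 \<Lambda> \<phi> \<kappa> (W x_ad))
           \<le> ereal (1/2 * (norm (A (W x) - y_delta))\<^sup>2)
             + ereal (C * \<delta>) * (R x + wl1 \<Lambda> \<phi> \<kappa> (W x))"
  interpret orthonormal_system \<Lambda> \<phi>
    using onb by unfold_locales (auto simp: orthonormal_basis_def)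
  have R_star: "\<bar>R x_star\<bar> \<noteq> \<infinity>"
    using R_proper R_nonneg subdiff_not_infinity[OF c23(1)] by (force simp: proper_fun_def)
  have wl1_star: "\<bar>wl1 \<Lambda> \<phi> \<kappa> (W x_star)\<bar> \<noteq> \<infinity>"
    using subdiff_wl1_finite[OF c23(2)] wl1_nonneg[of \<Lambda> \<phi> \<kappa> "W x_star"] by auto
  have source: "A (W u) \<bullet> \<nu> = u \<bullet> adjoint W (adjoint A \<nu>)" for u
    using adjoint_inner[OF A] adjoint_inner[OF W] by metis
  have J_nonneg: "0 \<le> R x + wl1 \<Lambda> \<phi> \<kappa> (W x)" for x
    using R_nonneg wl1_nonneg[of \<Lambda> \<phi> \<kappa> "W x"] by simp
  have "R x_star + wl1 \<Lambda> \<phi> \<kappa> (W x_star) \<noteq> \<infinity>" and "norm (y_delta - A (W x_star)) \<le> \<delta>"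
    using R_star wl1_star noise c21 by auto
  note rate = tikhonov_source_condition_rate[OF linear_compose[OF bounded_linear.linear[OF W]
      bounded_linear.linear[OF A], unfolded o_def] source J_nonneg c22 this(1) C_pos \<delta> this(2)
      min[rule_format, of x_star]]
  have "R x_ad \<noteq> -\<infinity>" "wl1 \<Lambda> \<phi> \<kappa> (W x_ad) \<noteq> -\<infinity>"
    using R_nonneg wl1_nonneg[of \<Lambda> \<phi> \<kappa> "W x_ad"] by auto
  note bregman_le = bregman_add_compose_le[OF W c23(1) R_star this(1) c23(2) wl1_star this(2)
      rate(1)[unfolded c23(3)]]
  have "norm (A (W x_ad - W x_star)) \<le> 2 * \<delta> * (1 + C * norm \<nu>)"
    using rate(2) by (simp add: linear_diff[OF bounded_linear.linear[OF A]])
  then show "bregman R \<xi> x_ad x_star \<le> ereal (c_const C (norm \<nu>) * \<delta>) \<and>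
      norm (W x_ad - W x_star) \<le>
        d_const C (norm \<nu>) (inv_opnorm A (span (\<phi> ` Omega \<Lambda> \<phi> \<kappa> \<eta>))) (onorm A)
          (\<Lambda> = Omega \<Lambda> \<phi> \<kappa> \<eta>) (m_eta \<Lambda> \<phi> \<kappa> \<eta>) * \<delta>"
    using norm_diff_le_d_const[OF _ a_pos \<kappa>_ge[rule_format] c23(2) A c24 bregman_le(2)]
      bregman_le(1) onb by (simp add: orthonormal_basis_def)
qed

end
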